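(* Let $(X,d)$ be a compact metric space, $f_{0,\infty}=\{f_n\}_{n=0}^\infty$ a sequence of continuous self-maps of $X$, and $\mu$ a Borel probability measure on $X$ that is $f_{0,\infty}$-invariant. For $k\ge1$ let $f^{(k)}_{0,\infty}=\{f_n\times\cdots\times f_n\ (k\text{ factors})\}_{n=0}^\infty$ on $X^k$, equipped with the product measure $\mu^{\otimes k}$. Then for any $A\in\mathcal{S}$, \[h_{A,\mu^{\otimes k}}(f_{0,\infty}^{(k)})=k\,h_{A,\mu}(f_{0,\infty}),\quad k\geq1.\]
   Context: $f_i^n=f_{i+n-1}\circ\cdots\circ f_i$, $f_i^0=\mathrm{id}$, $f_i^{-n}(B)=(f_i^n)^{-1}(B)$. $\mathcal S$ is the set of strictly increasing sequences $A=\{a_i\}_{i\ge1}$ of nonnegative integers. $\mu$ is $f_{0,\infty}$-invariant if $\mu(f_n^{-1}(B))=\mu(B)$ for all Borel $B$ and all $n\ge0$. For a finite Borel partition $\xi$, $\bigvee_{i=1}^n f_0^{-a_i}\xi$ is the common refinement of the partitions $f_0^{-a_i}\xi=\{f_0^{-a_i}C:C\in\xi\}$, $H_\mu(\eta)=-\sum_{C\in\eta}\mu(C)\ln\mu(C)$, $h_{A,\mu}(f_{0,\infty},\xi)=\limsup_{n\to\infty}\frac1nH_\mu(\bigvee_{i=1}^n f_0^{-a_i}\xi)$, and the measure-theoretic sequence entropy is $h_{A,\mu}(f_{0,\infty})=\sup_\xi h_{A,\mu}(f_{0,\infty},\xi)$ over finite Borel partitions of $X$ (analogously on $X^k$ with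 $\mu^{\otimes k}$). *)

theory Defs
  imports "HOL-Probability.Probability"
begin

fun fiter :: "(nat \<Rightarrow> 'b \<Rightarrow> 'b) \<Rightarrow> nat \<Rightarrow> nat \<Rightarrow> 'b \<Rightarrow> 'b" where
  "fiter T i 0 = id"
| "fiter T i (Suc n) = T (i + n) \<circ> fiter T i n"

definition fin_partition :: "'b measure \<Rightarrow> 'b set set \<Rightarrow> bool" where
  "fin_partition M P \<longleftrightarrow> finite P \<and> P \<subseteq> sets M \<and> \<Union>P = space M
     \<and> (\<forall>C\<in>P. \<forall>D\<in>P. C \<noteq> D \<longrightarrow> C \<inter> D = {})"

definition entr_fun :: "real \<Rightarrow> real" where
  "entr_fun p = (if p = 0 then 0 else - p * ln p)"

definition part_entropy :: "'b measure \<Rightarrow> 'b set set \<Rightarrow> real" where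
  "part_entropy M P = (\<Sum>C\<in>P. entr_fun (measure M C))"

text \<open>Common refinement of the partitions f_0^{-a_i} xi, i = 1..n (indices shifted: a 0, ..., a (n-1)).\<close>
definition seq_join ::
  "'b measure \<Rightarrow> (nat \<Rightarrow> 'b \<Rightarrow> 'b) \<Rightarrow> (nat \<Rightarrow> nat) \<Rightarrow> 'b set set \<Rightarrow> nat \<Rightarrow> 'b set set" where
  "seq_join M T a \<xi> n =
     {space M \<inter> (\<Inter>i\<in>{..<n}. fiter T 0 (a i) -` (c i)) | c. \<forall>i<n. c i \<in> \<xi>} - {{}}"

definition seq_entropy_part ::
  "'b measure \<Rightarrow> (nat \<Rightarrow> 'b \<Rightarrow> 'b) \<Rightarrow> (nat \<Rightarrow> nat) \<Rightarrow> 'b set set \<Rightarrow> ereal" where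
  "seq_entropy_part M T a \<xi> =
     limsup (\<lambda>n. ereal (part_entropy M (seq_join M T a \<xi> n) / real n))"

definition seq_entropy ::
  "'b measure \<Rightarrow> (nat \<Rightarrow> 'b \<Rightarrow> 'b) \<Rightarrow> (nat \<Rightarrow> nat) \<Rightarrow> ereal" where
  "seq_entropy M T a = (SUP \<xi>\<in>{\<xi>. fin_partition M \<xi>}. seq_entropy_part M T a \<xi>)"

end

theory Submission
  imports Defs
begin

text \<open>A finite partition is encoded by the simple function sending a point to its cell, so the entropy
  of the join of the partitions f_0^{-a_i} \<xi>, i < n, is the Shannon entropy of the itinerary
  x \<mapsto> (cell of f_0^{a_i} x)_{i<n}. For a product partition \<xi>^k of X^k the itinerary consists of
  k independent copies of the one on X, which gives h(f^(k)) \<ge> k h(f).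
  Conversely, for an arbitrary partition \<zeta> of X^k and a product partition \<eta>, submodularity of
  entropy and invariance of the measure give h(\<zeta>) \<le> h(\<eta>) + H(\<zeta> | \<eta>). Since the product
  \<sigma>-algebra is generated by cylinders, every cell of \<zeta> is approximated by a set depending only on
  which sets of a finite family F each coordinate lies in; for \<eta> generated by the atoms of F, a
  Fano-type inequality then makes H(\<zeta> | \<eta>) arbitrarily small.\<close>

section \<open>Entropy of simple functions\<close>

definition point_prob :: "'b measure \<Rightarrow> ('b \<Rightarrow> 'c) \<Rightarrow> 'c \<Rightarrow> real" where
  "point_prob M X v = measure M (X -` {v} \<inter> space M)"

definition sf_entropy :: "'b measure \<Rightarrow> ('b \<Rightarrow> 'c) \<Rightarrow> real" where
  "sf_entropy M X = (\<Sum>v\<in>X ` space M. entr_fun (point_prob M X v))"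

lemma entr_fun_eq: "entr_fun p = - p * ln p"
  by (simp add: entr_fun_def)

lemma point_prob_nonneg: "0 \<le> point_prob M X v"
  by (simp add: point_prob_def)

lemma sf_entropy_eq_sum_ln: "sf_entropy M X = - (\<Sum>v\<in>X ` space M. ln (point_prob M X v) * point_prob M X v)"
  by (simp add: sf_entropy_def entr_fun_eq sum_negf mult.commute)

lemma sf_entropy_eq_entropy:
  assumes "prob_space M" "simple_function M X"
  shows "sf_entropy M X = prob_space.entropy M (exp 1) (count_space (X ` space M)) X"
proof -
  interpret information_space M "exp 1"
    using assms(1) by (simp add: information_space_def information_space_axioms_def)
  have "entropy (exp 1) (count_space (X ` space M)) X
      = - (\<Sum>x\<in>X ` space M. prob (X -` {x} \<inter> space M) * log (exp 1) (prob (X -` {x} \<inter> space M)))"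
    by (rule entropy_simple_distributed[OF simple_distributedI[OF assms(2) measure_nonneg refl]])
  then show ?thesis
    by (simp add: sf_entropy_def point_prob_def entr_fun_eq log_def sum_negf)
qed

lemma sf_entropy_cong:
  assumes "\<And>x. x \<in> space M \<Longrightarrow> X x = Y x"
  shows "sf_entropy M X = sf_entropy M Y"
proof -
  have "X ` space M = Y ` space M" using assms by (auto simp: image_def)
  moreover have "\<And>v. X -` {v} \<inter> space M = Y -` {v} \<inter> space M" using assms by auto
  ultimately show ?thesis by (simp add: sf_entropy_def point_prob_def)
qed

lemma factor_through_fibres:
  assumes "\<And>x y. x \<in> space M \<Longrightarrow> y \<in> space M \<Longrightarrow> X x = X y \<Longrightarrow> Y x = Y y"
  obtains g where "\<And>x. x \<in> space M \<Longrightarrow> Y x = g (X x)"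
proof
  fix x assume x: "x \<in> space M"
  let ?y = "SOME y. y \<in> space M \<and> X y = X x"
  have "?y \<in> space M \<and> X ?y = X x" by (rule someI_ex) (use x in blast)
  then show "Y x = (\<lambda>v. Y (SOME y. y \<in> space M \<and> X y = v)) (X x)"
    using assms[of x ?y] x by simp
qed

lemma sf_entropy_le_of_factor:
  assumes "prob_space M" "simple_function M X"
    and "\<And>x y. x \<in> space M \<Longrightarrow> y \<in> space M \<Longrightarrow> X x = X y \<Longrightarrow> Y x = Y y"
  shows "sf_entropy M Y \<le> sf_entropy M X"
proof -
  interpret information_space M "exp 1"
    using assms(1) by (simp add: information_space_def information_space_axioms_def)
  obtain g where g: "\<And>x. x \<in> space M \<Longrightarrow> Y x = g (X x)"
    using factor_through_fibres[of M X Y] assms(3) by blast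
  have "sf_entropy M Y = sf_entropy M (g \<circ> X)" by (rule sf_entropy_cong) (simp add: g)
  also have "\<dots> = entropy (exp 1) (count_space ((g \<circ> X) ` space M)) (g \<circ> X)"
    by (rule sf_entropy_eq_entropy[OF assms(1)]) (use assms(2) in auto)
  also have "\<dots> \<le> entropy (exp 1) (count_space (X ` space M)) X"
    by (rule entropy_data_processing[OF assms(2)])
  also have "\<dots> = sf_entropy M X" by (rule sf_entropy_eq_entropy[OF assms(1,2), symmetric])
  finally show ?thesis .
qed

lemma simple_function_cong_fibres:
  assumes X: "simple_function M X"
    and eq: "\<And>x y. x \<in> space M \<Longrightarrow> y \<in> space M \<Longrightarrow> X x = X y \<longleftrightarrow> Y x = Y y"
  shows "simple_function M Y"
  unfolding simple_function_def
proof safe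
  obtain g where "\<And>x. x \<in> space M \<Longrightarrow> Y x = g (X x)"
    using factor_through_fibres[of M X Y] eq by blast
  then have "Y ` space M = g ` X ` space M" by (auto simp: image_iff)
  then show "finite (Y ` space M)" using X by (simp add: simple_function_def)
next
  fix x assume x: "x \<in> space M"
  have "Y -` {Y x} \<inter> space M = X -` {X x} \<inter> space M" using eq x by auto
  then show "Y -` {Y x} \<inter> space M \<in> sets M" using X x by (simp add: simple_function_def)
qed

lemma sf_entropy_cong_fibres:
  assumes "prob_space M" "simple_function M X"
    and "\<And>x y. x \<in> space M \<Longrightarrow> y \<in> space M \<Longrightarrow> X x = X y \<longleftrightarrow> Y x = Y y"
  shows "sf_entropy M X = sf_entropy M Y"
  using sf_entropy_le_of_factor[OF assms(1,2), of Y]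
    sf_entropy_le_of_factor[OF assms(1) simple_function_cong_fibres[OF assms(2,3)], of X] assms(3)
  by fastforce

lemma simple_function_vimage_singleton:
  "simple_function M W \<Longrightarrow> W -` {w} \<inter> space M \<in> sets M"
proof (cases "w \<in> W ` space M")
  case False
  then have "W -` {w} \<inter> space M = {}" by auto
  then show ?thesis by simp
qed (auto simp: simple_function_def)

lemma sum_point_prob_fibre:
  assumes "prob_space M" "simple_function M W"
  shows "(\<Sum>w\<in>{w\<in>W ` space M. \<pi> w = u}. point_prob M W w) = point_prob M (\<lambda>x. \<pi> (W x)) u"
proof -
  interpret prob_space M by fact
  have fin: "finite (W ` space M)" using assms(2) by (simp add: simple_function_def)
  have "(\<lambda>x. \<pi> (W x)) -` {u} \<inter> space M = (\<Union>w\<in>{w\<in>W ` space M. \<pi> w = u}. W -` {w} \<inter> space M)"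
    by auto
  then have "point_prob M (\<lambda>x. \<pi> (W x)) u
      = measure M (\<Union>w\<in>{w\<in>W ` space M. \<pi> w = u}. W -` {w} \<inter> space M)"
    by (simp add: point_prob_def)
  also have "\<dots> = (\<Sum>w\<in>{w\<in>W ` space M. \<pi> w = u}. measure M (W -` {w} \<inter> space M))"
    by (rule measure_finite_Union)
      (use fin simple_function_vimage_singleton[OF assms(2)] in \<open>auto simp: disjoint_family_on_def\<close>)
  finally show ?thesis by (simp add: point_prob_def)
qed

lemma sum_point_prob_compose:
  assumes "prob_space M" "simple_function M W"
  shows "(\<Sum>w\<in>W ` space M. g (\<pi> w) * point_prob M W w)
       = (\<Sum>u\<in>(\<lambda>x. \<pi> (W x)) ` space M. g u * point_prob M (\<lambda>x. \<pi> (W x)) u)"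
proof -
  have fin: "finite (W ` space M)" using assms(2) by (simp add: simple_function_def)
  have "(\<Sum>w\<in>W ` space M. g (\<pi> w) * point_prob M W w)
      = (\<Sum>u\<in>\<pi> ` W ` space M. \<Sum>w\<in>{w\<in>W ` space M. \<pi> w = u}. g (\<pi> w) * point_prob M W w)"
    by (rule sum.image_gen[OF fin])
  also have "\<dots> = (\<Sum>u\<in>\<pi> ` W ` space M. g u * (\<Sum>w\<in>{w\<in>W ` space M. \<pi> w = u}. point_prob M W w))"
    by (rule sum.cong) (auto simp: sum_distrib_left)
  finally show ?thesis by (simp add: sum_point_prob_fibre[OF assms] image_image)
qed

lemma measure_Collect_simple_function:
  assumes "prob_space M" "simple_function M W"
  shows "measure M {x\<in>space M. Q (W x)} = (\<Sum>w\<in>{w\<in>W ` space M. Q w}. point_prob M W w)"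
proof -
  have "(\<lambda>x. Q (W x)) -` {True} \<inter> space M = {x\<in>space M. Q (W x)}" by auto
  then show ?thesis using sum_point_prob_fibre[OF assms, of Q True] by (simp add: point_prob_def)
qed

lemma sum_point_prob_eq_1:
  assumes "prob_space M" "simple_function M W"
  shows "(\<Sum>w\<in>W ` space M. point_prob M W w) = 1"
  using measure_Collect_simple_function[OF assms, of "\<lambda>_. True"] prob_space.prob_space[OF assms(1)]
  by simp

lemma point_prob_le_compose:
  assumes "prob_space M" "simple_function M W"
  shows "point_prob M W w \<le> point_prob M (\<lambda>x. \<pi> (W x)) (\<pi> w)"
proof -
  interpret prob_space M by fact
  have "simple_function M (\<lambda>x. \<pi> (W x))" by (rule simple_function_compose1[OF assms(2)])
  then show ?thesis unfolding point_prob_def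
    by (intro finite_measure_mono) (auto dest: simple_function_vimage_singleton)
qed

lemma mult_ln_quotient_eq:
  fixes p q r s :: real
  assumes "0 \<le> p" "p \<le> q" "p \<le> r" "p \<le> s"
  shows "p * ln (p / (q * (r / s))) = ln p * p - ln q * p - ln r * p + ln s * p"
proof (cases "p = 0")
  case False
  then have "0 < p" "0 < q" "0 < r" "0 < s" using assms by linarith+
  then show ?thesis by (simp add: ln_div ln_mult algebra_simps)
qed simp

text \<open>Nonnegativity of the conditional mutual information I(X; Y | Z).\<close>
lemma sf_entropy_submodular:
  assumes P: "prob_space M" and X: "simple_function M X" and Y: "simple_function M Y"
    and Z: "simple_function M Z"
  shows "sf_entropy M (\<lambda>x. (X x, Y x, Z x)) + sf_entropy M Z
       \<le> sf_entropy M (\<lambda>x. (X x, Z x)) + sf_entropy M (\<lambda>x. (Y x, Z x))"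
proof -
  interpret information_space M "exp 1"
    using P by (simp add: information_space_def information_space_axioms_def)
  note XZ = simple_function_Pair[OF X Z] and YZ = simple_function_Pair[OF Y Z]
  note XYZ = simple_function_Pair[OF X YZ]
  let ?W = "\<lambda>x. (X x, Y x, Z x)"
  let ?p = "point_prob M ?W" and ?pxz = "point_prob M (\<lambda>x. (X x, Z x))"
    and ?pyz = "point_prob M (\<lambda>x. (Y x, Z x))" and ?pz = "point_prob M Z"
  have distr: "simple_distributed M V (point_prob M V)" if "simple_function M V" for V :: "_ \<Rightarrow> 'z"
    by (rule simple_distributedI[OF that]) (auto simp: point_prob_def)
  have le: "?p (x, y, z) \<le> ?pxz (x, z)" "?p (x, y, z) \<le> ?pyz (y, z)" "?p (x, y, z) \<le> ?pz z" for x y z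
    using point_prob_le_compose[OF P XYZ, where \<pi>="\<lambda>(x, y, z). (x, z)" and w="(x, y, z)"]
      point_prob_le_compose[OF P XYZ, where \<pi>="\<lambda>(x, y, z). (y, z)" and w="(x, y, z)"]
      point_prob_le_compose[OF P XYZ, where \<pi>="\<lambda>(x, y, z). z" and w="(x, y, z)"]
    by simp_all
  have "0 \<le> conditional_mutual_information (exp 1)
      (count_space (X ` space M)) (count_space (Y ` space M)) (count_space (Z ` space M)) X Y Z"
    by (rule conditional_mutual_information_nonneg[OF X Y Z])
  also have "\<dots> = (\<Sum>(x, y, z)\<in>?W ` space M.
      ?p (x, y, z) * log (exp 1) (?p (x, y, z) / (?pxz (x, z) * (?pyz (y, z) / ?pz z))))"
    by (rule conditional_mutual_information_eq[OF distr[OF Z] distr[OF YZ] distr[OF XZ] distr[OF XYZ]])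
  also have "\<dots> = (\<Sum>w\<in>?W ` space M. ln (?p w) * ?p w)
      - (\<Sum>w\<in>?W ` space M. ln (?pxz ((\<lambda>(x, y, z). (x, z)) w)) * ?p w)
      - (\<Sum>w\<in>?W ` space M. ln (?pyz ((\<lambda>(x, y, z). (y, z)) w)) * ?p w)
      + (\<Sum>w\<in>?W ` space M. ln (?pz ((\<lambda>(x, y, z). z) w)) * ?p w)"
    using mult_ln_quotient_eq[OF point_prob_nonneg le]
    by (simp add: log_def split_beta' sum_subtractf[symmetric] sum.distrib[symmetric])
  also have "\<dots> = - sf_entropy M ?W + sf_entropy M (\<lambda>x. (X x, Z x))
      + sf_entropy M (\<lambda>x. (Y x, Z x)) - sf_entropy M Z"
    unfolding sf_entropy_eq_sum_ln
    by (simp add: sum_point_prob_compose[OF P XYZ, of "\<lambda>u. ln (?pxz u)"] split_beta'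
        sum_point_prob_compose[OF P XYZ, of "\<lambda>u. ln (?pyz u)"]
        sum_point_prob_compose[OF P XYZ, of "\<lambda>u. ln (?pz u)"])
  finally show ?thesis by simp
qed

lemma sf_entropy_cond_pair_le:
  assumes P: "prob_space M" and X: "simple_function M X" and Y: "simple_function M Y"
    and U: "simple_function M U" and V: "simple_function M V"
  shows "sf_entropy M (\<lambda>x. (X x, U x, (Y x, V x))) - sf_entropy M (\<lambda>x. (Y x, V x))
     \<le> (sf_entropy M (\<lambda>x. (X x, Y x)) - sf_entropy M Y) + (sf_entropy M (\<lambda>x. (U x, V x)) - sf_entropy M V)"
proof -
  note sf = X Y U V simple_function_Pair
  have "sf_entropy M (\<lambda>x. (X x, U x, (Y x, V x))) + sf_entropy M (\<lambda>x. (Y x, V x))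
      \<le> sf_entropy M (\<lambda>x. (X x, (Y x, V x))) + sf_entropy M (\<lambda>x. (U x, (Y x, V x)))"
    by (rule sf_entropy_submodular[OF P X U]) (simp add: sf)
  moreover have "sf_entropy M (\<lambda>x. (X x, V x, Y x)) + sf_entropy M Y
      \<le> sf_entropy M (\<lambda>x. (X x, Y x)) + sf_entropy M (\<lambda>x. (V x, Y x))"
    by (rule sf_entropy_submodular[OF P X V Y])
  moreover have "sf_entropy M (\<lambda>x. (U x, Y x, V x)) + sf_entropy M V
      \<le> sf_entropy M (\<lambda>x. (U x, V x)) + sf_entropy M (\<lambda>x. (Y x, V x))"
    by (rule sf_entropy_submodular[OF P U Y V])
  moreover have "sf_entropy M (\<lambda>x. (X x, (Y x, V x))) = sf_entropy M (\<lambda>x. (X x, V x, Y x))"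
    and "sf_entropy M (\<lambda>x. (V x, Y x)) = sf_entropy M (\<lambda>x. (Y x, V x))"
    and "sf_entropy M (\<lambda>x. (U x, (Y x, V x))) = sf_entropy M (\<lambda>x. (U x, Y x, V x))"
    by (rule sf_entropy_cong_fibres[OF P]; auto simp: sf)+
  ultimately show ?thesis by linarith
qed

lemma ln_ratio_le_diff:
  fixes p q :: real
  assumes "0 \<le> p" "p \<le> q"
  shows "p * (ln q - ln p) \<le> q - p"
proof (cases "p = 0")
  case False
  then have p: "0 < p" using assms by simp
  have "ln (q / p) \<le> q / p - 1" by (rule ln_le_minus_one) (use assms p in simp)
  then have "p * ln (q / p) \<le> p * (q / p - 1)" using p by (intro mult_left_mono) auto
  then show ?thesis using assms p by (simp add: ln_div algebra_simps)
qed (use assms in simp)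

lemma ln_ratio_le_scaled:
  fixes p q c :: real
  assumes "0 \<le> p" "p \<le> q" "0 < c"
  shows "p * (ln q - ln p) \<le> c * q + p * ln (1 / c)"
proof (cases "p = 0")
  case False
  then have p: "0 < p" using assms by simp
  have "ln (c * q / p) \<le> c * q / p - 1" by (rule ln_le_minus_one) (use assms p in simp)
  then have "p * ln (c * q / p) \<le> p * (c * q / p - 1)" using p by (intro mult_left_mono) auto
  then show ?thesis using assms p by (simp add: ln_div ln_mult algebra_simps)
qed (use assms in simp)

lemma sum_point_prob_inj_snd_le_1:
  assumes "prob_space M" "simple_function M Y" "inj_on snd S" "snd ` S \<subseteq> Y ` space M"
  shows "(\<Sum>w\<in>S. point_prob M Y (snd w)) \<le> 1"
proof -
  have "(\<Sum>w\<in>S. point_prob M Y (snd w)) = (\<Sum>v\<in>snd ` S. point_prob M Y v)"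
    by (simp add: sum.reindex[OF assms(3)])
  also have "\<dots> \<le> (\<Sum>v\<in>Y ` space M. point_prob M Y v)"
    using assms(2,4) by (intro sum_mono2) (auto simp: simple_function_def point_prob_nonneg)
  finally show ?thesis using sum_point_prob_eq_1[OF assms(1,2)] by simp
qed

lemma sum_point_prob_snd_le_card:
  assumes "prob_space M" "simple_function M Y" "finite A" "S \<subseteq> A \<times> Y ` space M"
  shows "(\<Sum>w\<in>S. point_prob M Y (snd w)) \<le> card A"
proof -
  have "finite (Y ` space M)" using assms(2) by (simp add: simple_function_def)
  then have "(\<Sum>w\<in>S. point_prob M Y (snd w)) \<le> (\<Sum>w\<in>A \<times> Y ` space M. point_prob M Y (snd w))"
    using assms(3,4) by (intro sum_mono2) (auto simp: point_prob_nonneg)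
  also have "\<dots> = (\<Sum>u\<in>A. \<Sum>v\<in>Y ` space M. point_prob M Y v)"
    by (subst sum.cartesian_product) (simp add: split_beta')
  finally show ?thesis by (simp add: sum_point_prob_eq_1[OF assms(1,2)])
qed

lemma sf_entropy_pair_diff_eq:
  assumes "prob_space M" "simple_function M X" "simple_function M Y"
  defines "W \<equiv> \<lambda>x. (X x, Y x)"
  shows "sf_entropy M W - sf_entropy M Y
       = (\<Sum>w\<in>W ` space M. point_prob M W w * (ln (point_prob M Y (snd w)) - ln (point_prob M W w)))"
proof -
  have "sf_entropy M Y = - (\<Sum>w\<in>W ` space M. ln (point_prob M Y (snd w)) * point_prob M W w)"
    unfolding sf_entropy_eq_sum_ln W_def
    using sum_point_prob_compose[OF assms(1) simple_function_Pair[OF assms(2,3)], of "\<lambda>v. ln (point_prob M Y v)" snd] by simp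
  then show ?thesis
    by (simp add: sf_entropy_eq_sum_ln[of M W] sum_subtractf[symmetric] algebra_simps)
qed

lemma sf_entropy_pair_diff_le_guess_error:
  assumes P: "prob_space M" and X: "simple_function M X" and Y: "simple_function M Y" and c: "0 < c"
  shows "sf_entropy M (\<lambda>x. (X x, Y x)) - sf_entropy M Y
      \<le> measure M {x\<in>space M. X x \<noteq> g (Y x)} * (1 + ln (1 / c)) + c * card (X ` space M)"
proof -
  let ?W = "\<lambda>x. (X x, Y x)"
  let ?p = "point_prob M ?W" and ?q = "point_prob M Y"
  define D where "D = measure M {x\<in>space M. X x \<noteq> g (Y x)}"
  define W1 where "W1 = {w\<in>?W ` space M. fst w = g (snd w)}"
  define W2 where "W2 = {w\<in>?W ` space M. fst w \<noteq> g (snd w)}"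
  note W = simple_function_Pair[OF X Y]
  have finW: "finite (?W ` space M)" using W by (simp add: simple_function_def)
  have finX: "finite (X ` space M)" using X by (simp add: simple_function_def)
  have W12: "W1 \<union> W2 = ?W ` space M" "W1 \<inter> W2 = {}" by (auto simp: W1_def W2_def)
  have p2: "(\<Sum>w\<in>W2. ?p w) = D"
    unfolding D_def W2_def using measure_Collect_simple_function[OF P W, of "\<lambda>w. fst w \<noteq> g (snd w)"]
    by simp
  have "(\<Sum>w\<in>W1. ?p w) + (\<Sum>w\<in>W2. ?p w) = 1"
    using sum_point_prob_eq_1[OF P W] sum.union_disjoint[of W1 W2 ?p] finW W12 by (metis finite_Un)
  then have p1: "(\<Sum>w\<in>W1. ?p w) = 1 - D" using p2 by simp
  have q1: "(\<Sum>w\<in>W1. ?q (snd w)) \<le> 1"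
    by (rule sum_point_prob_inj_snd_le_1[OF P Y]) (auto simp: W1_def inj_on_def prod_eq_iff)
  have q2: "(\<Sum>w\<in>W2. ?q (snd w)) \<le> card (X ` space M)"
    by (rule sum_point_prob_snd_le_card[OF P Y finX]) (auto simp: W2_def)
  have "sf_entropy M ?W - sf_entropy M Y = (\<Sum>w\<in>?W ` space M. ?p w * (ln (?q (snd w)) - ln (?p w)))"
    by (rule sf_entropy_pair_diff_eq[OF P X Y])
  also have "\<dots> \<le> (\<Sum>w\<in>?W ` space M.
      if fst w = g (snd w) then ?q (snd w) - ?p w else c * ?q (snd w) + ?p w * ln (1 / c))"
    using ln_ratio_le_diff[OF point_prob_nonneg point_prob_le_compose[OF P W, where \<pi>=snd]]
      ln_ratio_le_scaled[OF point_prob_nonneg point_prob_le_compose[OF P W, where \<pi>=snd] c]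
    by (intro sum_mono) auto
  also have "\<dots> = (\<Sum>w\<in>W1. ?q (snd w)) - (\<Sum>w\<in>W1. ?p w)
      + c * (\<Sum>w\<in>W2. ?q (snd w)) + (\<Sum>w\<in>W2. ?p w) * ln (1 / c)"
    unfolding W1_def W2_def
    by (simp add: sum.If_cases[OF finW] Int_def Collect_conj_eq[symmetric] conj_commute
        sum_subtractf sum.distrib sum_distrib_left sum_distrib_right)
  also have "\<dots> \<le> 1 - (1 - D) + c * card (X ` space M) + D * ln (1 / c)"
    unfolding p1 p2 using q1 mult_left_mono[OF q2, of c] c by linarith
  finally show ?thesis by (simp add: D_def algebra_simps)
qed

section \<open>Itineraries and the sequence entropy of a partition\<close>

definition cell_of :: "'b set set \<Rightarrow> 'b \<Rightarrow> 'b set" where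
  "cell_of \<xi> x = (THE C. C \<in> \<xi> \<and> x \<in> C)"

lemma cell_of_mem:
  assumes "fin_partition M \<xi>" "x \<in> space M"
  shows "cell_of \<xi> x \<in> \<xi>" "x \<in> cell_of \<xi> x"
proof -
  have "\<exists>C. C \<in> \<xi> \<and> x \<in> C" using assms by (auto simp: fin_partition_def)
  moreover have "C = D" if "C \<in> \<xi> \<and> x \<in> C" "D \<in> \<xi> \<and> x \<in> D" for C D
    using that assms(1) unfolding fin_partition_def by blast
  ultimately have "\<exists>!C. C \<in> \<xi> \<and> x \<in> C" by blast
  then have "cell_of \<xi> x \<in> \<xi> \<and> x \<in> cell_of \<xi> x" unfolding cell_of_def by (rule theI')
  then show "cell_of \<xi> x \<in> \<xi>" "x \<in> cell_of \<xi> x" by simp_all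
qed

lemma cell_of_eq_iff:
  assumes "fin_partition M \<xi>" "x \<in> space M" "C \<in> \<xi>"
  shows "cell_of \<xi> x = C \<longleftrightarrow> x \<in> C"
  using cell_of_mem[OF assms(1,2)] assms unfolding fin_partition_def by blast

lemma simple_function_cell_of:
  assumes "fin_partition M \<xi>"
  shows "simple_function M (cell_of \<xi>)"
  unfolding simple_function_def
proof safe
  have "cell_of \<xi> ` space M \<subseteq> \<xi>" using cell_of_mem[OF assms] by auto
  then show "finite (cell_of \<xi> ` space M)"
    using assms by (auto simp: fin_partition_def intro: finite_subset)
next
  fix x assume x: "x \<in> space M"
  have C: "cell_of \<xi> x \<in> \<xi>" using cell_of_mem[OF assms x] by simp
  moreover have "cell_of \<xi> x \<subseteq> space M" using C assms by (auto simp: fin_partition_def)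
  ultimately have "cell_of \<xi> -` {cell_of \<xi> x} \<inter> space M = cell_of \<xi> x"
    using cell_of_eq_iff[OF assms _ C] by auto
  then show "cell_of \<xi> -` {cell_of \<xi> x} \<inter> space M \<in> sets M"
    using C assms by (auto simp: fin_partition_def)
qed

definition measure_preserving :: "'b measure \<Rightarrow> ('b \<Rightarrow> 'b) \<Rightarrow> bool" where
  "measure_preserving M S \<longleftrightarrow>
     S \<in> M \<rightarrow>\<^sub>M M \<and> (\<forall>A\<in>sets M. measure M (S -` A \<inter> space M) = measure M A)"

lemma measure_preserving_fiter:
  assumes "\<And>n. measure_preserving M (T n)"
  shows "measure_preserving M (fiter T i m)"
proof (induction m)
  case 0
  show ?case by (auto simp: measure_preserving_def sets.sets_into_space Int_absorb2)
next
  case (Suc m)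
  let ?S = "fiter T i m"
  have S: "?S \<in> M \<rightarrow>\<^sub>M M" and T: "T (i + m) \<in> M \<rightarrow>\<^sub>M M"
    using Suc assms by (simp_all add: measure_preserving_def)
  have "(T (i + m) \<circ> ?S) -` A \<inter> space M = ?S -` (T (i + m) -` A \<inter> space M) \<inter> space M" for A
    using measurable_space[OF S] by auto
  then have "\<forall>A\<in>sets M. measure M ((T (i + m) \<circ> ?S) -` A \<inter> space M) = measure M A"
    using Suc assms measurable_sets[OF T] unfolding measure_preserving_def by metis
  then show ?case using measurable_comp[OF S T] by (simp add: measure_preserving_def comp_def)
qed

lemma measurable_fiter:
  assumes "\<And>n. measure_preserving M (T n)"
  shows "fiter T i m \<in> M \<rightarrow>\<^sub>M M"
  using measure_preserving_fiter[of M T i m, OF assms] by (simp add: measure_preserving_def)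

lemma sf_entropy_compose_measure_preserving:
  assumes S: "measure_preserving M S" and X: "simple_function M X"
  shows "sf_entropy M (\<lambda>x. X (S x)) = sf_entropy M X"
proof -
  have mS: "S \<in> M \<rightarrow>\<^sub>M M" using S by (simp add: measure_preserving_def)
  have vimage: "(\<lambda>x. X (S x)) -` {v} \<inter> space M = S -` (X -` {v} \<inter> space M) \<inter> space M" for v
    using measurable_space[OF mS] by auto
  have pp: "point_prob M (\<lambda>x. X (S x)) v = point_prob M X v" for v
    using S simple_function_vimage_singleton[OF X] unfolding point_prob_def vimage measure_preserving_def
    by blast
  have "(\<lambda>x. X (S x)) ` space M \<subseteq> X ` space M" using measurable_space[OF mS] by auto
  moreover have "finite (X ` space M)" using X by (simp add: simple_function_def)
  moreover have "point_prob M (\<lambda>x. X (S x)) v = 0" if "v \<notin> (\<lambda>x. X (S x)) ` space M" for v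
  proof -
    have "(\<lambda>x. X (S x)) -` {v} \<inter> space M = {}" using that by auto
    then show ?thesis by (simp add: point_prob_def)
  qed
  ultimately have "sf_entropy M (\<lambda>x. X (S x)) = (\<Sum>v\<in>X ` space M. entr_fun (point_prob M (\<lambda>x. X (S x)) v))"
    unfolding sf_entropy_def by (intro sum.mono_neutral_left) (auto simp: entr_fun_def)
  then show ?thesis by (simp add: sf_entropy_def pp)
qed

definition itinerary :: "'b set set \<Rightarrow> (nat \<Rightarrow> 'b \<Rightarrow> 'b) \<Rightarrow> (nat \<Rightarrow> nat) \<Rightarrow> nat \<Rightarrow> 'b \<Rightarrow> 'b set list"
  where "itinerary \<xi> T a n x = map (\<lambda>i. cell_of \<xi> (fiter T 0 (a i) x)) [0..<n]"

lemma itinerary_Suc: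
  "itinerary \<xi> T a (Suc n) x = itinerary \<xi> T a n x @ [cell_of \<xi> (fiter T 0 (a n) x)]"
  by (simp add: itinerary_def)

lemma simple_function_itinerary:
  assumes "fin_partition M \<xi>" "\<And>m. fiter T 0 m \<in> M \<rightarrow>\<^sub>M M"
  shows "simple_function M (itinerary \<xi> T a n)"
proof (induction n)
  case 0
  then show ?case by (simp add: itinerary_def)
next
  case (Suc n)
  have "simple_function M (\<lambda>x. cell_of \<xi> (fiter T 0 (a n) x))"
    by (rule simple_function_comp[OF assms(2) simple_function_cell_of[OF assms(1)]])
  from simple_function_compose2[OF Suc.IH this, of "\<lambda>l e. l @ [e]"] show ?case
    by (simp add: itinerary_Suc fun_eq_iff)
qed

lemma mem_join_cell_iff:
  assumes \<xi>: "fin_partition M \<xi>" and T: "\<And>m. fiter T 0 m \<in> M \<rightarrow>\<^sub>M M" and c: "\<forall>i<n. c i \<in> \<xi>"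
  shows "y \<in> space M \<inter> (\<Inter>i\<in>{..<n}. fiter T 0 (a i) -` c i) \<longleftrightarrow>
       y \<in> space M \<and> (\<forall>i<n. cell_of \<xi> (fiter T 0 (a i) y) = c i)"
proof (cases "y \<in> space M")
  case True
  then have "\<forall>i<n. fiter T 0 (a i) y \<in> c i \<longleftrightarrow> cell_of \<xi> (fiter T 0 (a i) y) = c i"
    using cell_of_eq_iff[OF \<xi> measurable_space[OF T]] c by blast
  then show ?thesis using True by auto
qed simp

lemma seq_join_eq_fibres_itinerary:
  assumes \<xi>: "fin_partition M \<xi>" and T: "\<And>m. fiter T 0 m \<in> M \<rightarrow>\<^sub>M M"
  shows "seq_join M T a \<xi> n
       = (\<lambda>v. itinerary \<xi> T a n -` {v} \<inter> space M) ` (itinerary \<xi> T a n ` space M)"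
proof -
  define V where "V = itinerary \<xi> T a n"
  have sp: "fiter T 0 m x \<in> space M" if "x \<in> space M" for m x
    using measurable_space[OF T that] .
  note cell_iff = mem_join_cell_iff[OF \<xi> T]
  have V_eq: "V y = V x \<longleftrightarrow> (\<forall>i<n. cell_of \<xi> (fiter T 0 (a i) y) = cell_of \<xi> (fiter T 0 (a i) x))"
    for x y by (auto simp: V_def itinerary_def map_eq_conv)
  show ?thesis
    unfolding V_def[symmetric]
  proof (intro set_eqI iffI)
    fix D assume "D \<in> seq_join M T a \<xi> n"
    then obtain c where c: "\<forall>i<n. c i \<in> \<xi>" and D: "D = space M \<inter> (\<Inter>i\<in>{..<n}. fiter T 0 (a i) -` c i)"
      and "D \<noteq> {}" by (auto simp: seq_join_def)
    then obtain x where x: "x \<in> D" by auto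
    have "D = V -` {V x} \<inter> space M"
    proof (intro set_eqI)
      fix y
      show "y \<in> D \<longleftrightarrow> y \<in> V -` {V x} \<inter> space M"
        using x V_eq[of y x] unfolding D cell_iff[OF c] by auto
    qed
    then show "D \<in> (\<lambda>v. V -` {v} \<inter> space M) ` (V ` space M)" using x D by auto
  next
    fix D assume "D \<in> (\<lambda>v. V -` {v} \<inter> space M) ` (V ` space M)"
    then obtain x where x: "x \<in> space M" and D: "D = V -` {V x} \<inter> space M" by auto
    define c where "c i = cell_of \<xi> (fiter T 0 (a i) x)" for i
    have c: "\<forall>i<n. c i \<in> \<xi>" using cell_of_mem[OF \<xi> sp[OF x]] by (simp add: c_def)
    have "D = space M \<inter> (\<Inter>i\<in>{..<n}. fiter T 0 (a i) -` c i)"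
    proof (intro set_eqI)
      fix y
      show "y \<in> D \<longleftrightarrow> y \<in> space M \<inter> (\<Inter>i\<in>{..<n}. fiter T 0 (a i) -` c i)"
        unfolding D cell_iff[OF c] using V_eq[of y x] by (auto simp: c_def)
    qed
    moreover have "D \<noteq> {}" using x D by auto
    ultimately show "D \<in> seq_join M T a \<xi> n" using c by (auto simp: seq_join_def)
  qed
qed

lemma part_entropy_seq_join:
  assumes "fin_partition M \<xi>" "\<And>m. fiter T 0 m \<in> M \<rightarrow>\<^sub>M M"
  shows "part_entropy M (seq_join M T a \<xi> n) = sf_entropy M (itinerary \<xi> T a n)"
proof -
  let ?V = "itinerary \<xi> T a n"
  have inj: "inj_on (\<lambda>v. ?V -` {v} \<inter> space M) (?V ` space M)"
    by (rule inj_onI) blast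
  show ?thesis
    unfolding part_entropy_def seq_join_eq_fibres_itinerary[OF assms] sum.reindex[OF inj]
    by (simp add: sf_entropy_def point_prob_def comp_def)
qed

text \<open>Splitting off the cells at time a n, the step of the induction uses
  sf_entropy_cond_pair_le and the invariance of the measure.\<close>
lemma sf_entropy_itinerary_pair_diff_le:
  assumes P: "prob_space M" and T: "\<And>n. measure_preserving M (T n)"
    and \<zeta>: "fin_partition M \<zeta>" and \<eta>: "fin_partition M \<eta>"
  shows "sf_entropy M (\<lambda>x. (itinerary \<zeta> T a n x, itinerary \<eta> T a n x)) - sf_entropy M (itinerary \<eta> T a n)
     \<le> real n * (sf_entropy M (\<lambda>x. (cell_of \<zeta> x, cell_of \<eta> x)) - sf_entropy M (cell_of \<eta>))"
proof (induction n)
  case 0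
  have "sf_entropy M (\<lambda>x. (itinerary \<zeta> T a 0 x, itinerary \<eta> T a 0 x)) = sf_entropy M (itinerary \<eta> T a 0)"
    by (rule sf_entropy_cong_fibres[OF P]) (simp_all add: itinerary_def)
  then show ?case by simp
next
  case (Suc n)
  note T' = measurable_fiter[OF T]
  define A where "A = itinerary \<zeta> T a n"
  define B where "B = itinerary \<eta> T a n"
  define a' where "a' = (\<lambda>x. cell_of \<zeta> (fiter T 0 (a n) x))"
  define b' where "b' = (\<lambda>x. cell_of \<eta> (fiter T 0 (a n) x))"
  have sA: "simple_function M A" unfolding A_def by (rule simple_function_itinerary[OF \<zeta> T'])
  have sB: "simple_function M B" unfolding B_def by (rule simple_function_itinerary[OF \<eta> T'])
  have sa: "simple_function M a'"
    unfolding a'_def by (rule simple_function_comp[OF T' simple_function_cell_of[OF \<zeta>]])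
  have sb: "simple_function M b'"
    unfolding b'_def by (rule simple_function_comp[OF T' simple_function_cell_of[OF \<eta>]])
  note sf = sA sB sa sb simple_function_Pair
  have e1: "sf_entropy M (\<lambda>x. (itinerary \<zeta> T a (Suc n) x, itinerary \<eta> T a (Suc n) x))
      = sf_entropy M (\<lambda>x. (A x, a' x, (B x, b' x)))"
    by (rule sf_entropy_cong_fibres[OF P])
      (simp add: sf simple_function_itinerary[OF \<zeta> T'] simple_function_itinerary[OF \<eta> T'],
       auto simp: itinerary_Suc A_def B_def a'_def b'_def)
  have e2: "sf_entropy M (itinerary \<eta> T a (Suc n)) = sf_entropy M (\<lambda>x. (B x, b' x))"
    by (rule sf_entropy_cong_fibres[OF P])
      (simp add: simple_function_itinerary[OF \<eta> T'], auto simp: itinerary_Suc B_def b'_def)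
  have cond: "sf_entropy M (\<lambda>x. (A x, a' x, (B x, b' x))) - sf_entropy M (\<lambda>x. (B x, b' x))
      \<le> (sf_entropy M (\<lambda>x. (A x, B x)) - sf_entropy M B) + (sf_entropy M (\<lambda>x. (a' x, b' x)) - sf_entropy M b')"
    by (rule sf_entropy_cond_pair_le[OF P sA sB sa sb])
  have i1: "sf_entropy M (\<lambda>x. (a' x, b' x)) = sf_entropy M (\<lambda>x. (cell_of \<zeta> x, cell_of \<eta> x))"
    unfolding a'_def b'_def
    using sf_entropy_compose_measure_preserving[OF measure_preserving_fiter[OF T],
        where X="\<lambda>x. (cell_of \<zeta> x, cell_of \<eta> x)"]
    by (simp add: simple_function_cell_of[OF \<zeta>] simple_function_cell_of[OF \<eta>])
  have i2: "sf_entropy M b' = sf_entropy M (cell_of \<eta>)"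
    unfolding b'_def
    by (rule sf_entropy_compose_measure_preserving[OF measure_preserving_fiter[OF T]
          simple_function_cell_of[OF \<eta>]])
  show ?case
    using cond e1 e2 i1 i2 Suc.IH by (simp add: A_def B_def algebra_simps)
qed

lemma part_entropy_seq_join_le:
  assumes P: "prob_space M" and T: "\<And>n. measure_preserving M (T n)"
    and \<zeta>: "fin_partition M \<zeta>" and \<eta>: "fin_partition M \<eta>"
  shows "part_entropy M (seq_join M T a \<zeta> n) \<le> part_entropy M (seq_join M T a \<eta> n)
     + real n * (sf_entropy M (\<lambda>x. (cell_of \<zeta> x, cell_of \<eta> x)) - sf_entropy M (cell_of \<eta>))"
proof -
  note T' = measurable_fiter[OF T]
  have "sf_entropy M (itinerary \<zeta> T a n)
      \<le> sf_entropy M (\<lambda>x. (itinerary \<zeta> T a n x, itinerary \<eta> T a n x))"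
    by (rule sf_entropy_le_of_factor[OF P])
      (auto simp: simple_function_itinerary[OF \<zeta> T'] simple_function_itinerary[OF \<eta> T'])
  then show ?thesis
    using sf_entropy_itinerary_pair_diff_le[of M T \<zeta> \<eta> a n, OF P T \<zeta> \<eta>]
    by (simp add: part_entropy_seq_join[OF \<zeta> T'] part_entropy_seq_join[OF \<eta> T'])
qed

lemma seq_entropy_part_le:
  assumes P: "prob_space M" and T: "\<And>n. measure_preserving M (T n)"
    and \<zeta>: "fin_partition M \<zeta>" and \<eta>: "fin_partition M \<eta>"
  shows "seq_entropy_part M T a \<zeta> \<le> seq_entropy_part M T a \<eta>
     + ereal (sf_entropy M (\<lambda>x. (cell_of \<zeta> x, cell_of \<eta> x)) - sf_entropy M (cell_of \<eta>))"
proof -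
  define c where "c = sf_entropy M (\<lambda>x. (cell_of \<zeta> x, cell_of \<eta> x)) - sf_entropy M (cell_of \<eta>)"
  have "0 \<le> c"
    unfolding c_def using sf_entropy_le_of_factor[OF P, of "\<lambda>x. (cell_of \<zeta> x, cell_of \<eta> x)" "cell_of \<eta>"]
    by (simp add: simple_function_cell_of[OF \<zeta>] simple_function_cell_of[OF \<eta>])
  have "part_entropy M (seq_join M T a \<zeta> n) / real n \<le> part_entropy M (seq_join M T a \<eta> n) / real n + c"
    for n
  proof (cases "n = 0")
    case False
    have "part_entropy M (seq_join M T a \<zeta> n) / real n
        \<le> (part_entropy M (seq_join M T a \<eta> n) + real n * c) / real n"
      using part_entropy_seq_join_le[of M T \<zeta> \<eta> a n, OF P T \<zeta> \<eta>]
      by (simp add: c_def divide_right_mono)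
    also have "\<dots> = part_entropy M (seq_join M T a \<eta> n) / real n + c"
      using False by (simp add: field_simps)
    finally show ?thesis .
  qed (simp add: \<open>0 \<le> c\<close>)
  then have "seq_entropy_part M T a \<zeta>
      \<le> limsup (\<lambda>n. ereal (part_entropy M (seq_join M T a \<eta> n) / real n) + ereal c)"
    unfolding seq_entropy_part_def by (intro Limsup_mono) simp
  also have "\<dots> \<le> seq_entropy_part M T a \<eta> + limsup (\<lambda>n. ereal c)"
    unfolding seq_entropy_part_def by (rule ereal_limsup_add_mono)
  finally show ?thesis by (simp add: c_def Limsup_const)
qed

lemma part_entropy_nonneg:
  assumes "prob_space M"
  shows "0 \<le> part_entropy M \<xi>"
proof -
  interpret prob_space M by fact
  have "0 \<le> entr_fun (measure M C)" for C
  proof (cases "measure M C = 0")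
    case False
    then have "0 < measure M C" using measure_nonneg[of M C] by linarith
    moreover have "ln (measure M C) \<le> 0" using calculation prob_le_1[of C] by simp
    ultimately show ?thesis by (simp add: entr_fun_def mult_nonneg_nonpos)
  qed (simp add: entr_fun_def)
  then show ?thesis unfolding part_entropy_def by (intro sum_nonneg)
qed

lemma seq_entropy_part_nonneg:
  assumes "prob_space M"
  shows "0 \<le> seq_entropy_part M T a \<xi>"
proof -
  have "limsup (\<lambda>n. (0::ereal)) \<le> seq_entropy_part M T a \<xi>"
    unfolding seq_entropy_part_def
    by (rule Limsup_mono) (use part_entropy_nonneg[OF assms] in simp)
  then show ?thesis by (simp add: Limsup_const)
qed

section \<open>Product partitions\<close>

lemma entr_fun_prod:
  fixes x :: "'i \<Rightarrow> real"
  assumes fin: "finite I" and nn: "\<And>j. j \<in> I \<Longrightarrow> 0 \<le> x j"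
  shows "entr_fun (\<Prod>j\<in>I. x j) = (\<Sum>l\<in>I. entr_fun (x l) * (\<Prod>j\<in>I - {l}. x j))"
proof (cases "\<exists>j\<in>I. x j = 0")
  case True
  then obtain j0 where j0: "j0 \<in> I" "x j0 = 0" by blast
  have "entr_fun (x l) * (\<Prod>j\<in>I - {l}. x j) = 0" if "l \<in> I" for l
    using fin j0 by (cases "l = j0") (auto simp: entr_fun_def prod_zero_iff)
  moreover have "(\<Prod>j\<in>I. x j) = 0" using fin j0 by (auto simp: prod_zero_iff)
  ultimately show ?thesis by (simp add: entr_fun_def[of 0] sum.neutral)
next
  case False
  then have pos: "\<And>j. j \<in> I \<Longrightarrow> 0 < x j" using nn by (simp add: less_le)
  have "ln (\<Prod>j\<in>I. x j) = (\<Sum>l\<in>I. ln (x l))"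
    by (rule ln_prod[OF fin]) (use pos in force)
  then have "entr_fun (\<Prod>j\<in>I. x j) = - (\<Prod>j\<in>I. x j) * (\<Sum>l\<in>I. ln (x l))"
    by (simp add: entr_fun_eq)
  also have "\<dots> = (\<Sum>l\<in>I. entr_fun (x l) * (\<Prod>j\<in>I - {l}. x j))"
    unfolding sum_distrib_left
    by (intro sum.cong refl) (simp add: entr_fun_eq prod.remove[OF fin])
  finally show ?thesis .
qed

text \<open>Expanding entr_fun of the product by entr_fun_prod, every summand factorises over the
  coordinates, and all factors but one are sums of p over S, i.e. 1.\<close>
lemma sum_entr_fun_prod_PiE:
  fixes p :: "'s \<Rightarrow> real"
  assumes fin: "finite I" and finS: "finite S" and nn: "\<And>s. s \<in> S \<Longrightarrow> 0 \<le> p s"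
    and tot: "(\<Sum>s\<in>S. p s) = 1"
  shows "(\<Sum>v\<in>PiE I (\<lambda>_. S). entr_fun (\<Prod>j\<in>I. p (v j))) = real (card I) * (\<Sum>s\<in>S. entr_fun (p s))"
proof -
  define g where "g l j s = (if j = l then entr_fun (p s) else p s)" for l j :: 'a and s
  have g_prod: "entr_fun (p (v l)) * (\<Prod>j\<in>I - {l}. p (v j)) = (\<Prod>j\<in>I. g l j (v j))"
    if "l \<in> I" for v l
  proof -
    have "(\<Prod>j\<in>I - {l}. g l j (v j)) = (\<Prod>j\<in>I - {l}. p (v j))"
      by (rule prod.cong) (auto simp: g_def)
    then show ?thesis using that fin by (simp add: prod.remove g_def)
  qed
  have g_sum: "(\<Prod>j\<in>I. \<Sum>s\<in>S. g l j s) = (\<Sum>s\<in>S. entr_fun (p s))" if "l \<in> I" for l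
  proof -
    have "(\<Prod>j\<in>I - {l}. \<Sum>s\<in>S. g l j s) = 1"
      by (rule prod.neutral) (auto simp: g_def tot)
    then show ?thesis using that fin by (simp add: prod.remove g_def)
  qed
  have "(\<Sum>v\<in>PiE I (\<lambda>_. S). entr_fun (\<Prod>j\<in>I. p (v j)))
      = (\<Sum>v\<in>PiE I (\<lambda>_. S). \<Sum>l\<in>I. \<Prod>j\<in>I. g l j (v j))"
    using entr_fun_prod[OF fin] nn g_prod by (intro sum.cong refl) (auto simp: PiE_iff)
  also have "\<dots> = (\<Sum>l\<in>I. \<Sum>v\<in>PiE I (\<lambda>_. S). \<Prod>j\<in>I. g l j (v j))" by (rule sum.swap)
  also have "\<dots> = (\<Sum>l\<in>I. \<Prod>j\<in>I. \<Sum>s\<in>S. g l j s)"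
    using fin finS by (intro sum.cong refl) (rule prod_sum_PiE[symmetric])
  finally show ?thesis using g_sum by simp
qed

lemma sf_entropy_PiM:
  assumes prob: "prob_space M" and V: "simple_function M V" and I: "finite I"
  shows "sf_entropy (PiM I (\<lambda>_. M)) (\<lambda>z. restrict (\<lambda>j. V (z j)) I) = real (card I) * sf_entropy M V"
proof -
  interpret product_prob_space "\<lambda>_. M" by (rule product_prob_spaceI) (rule prob)
  interpret finite_product_prob_space "\<lambda>_. M" I by unfold_locales (rule I)
  let ?N = "PiM I (\<lambda>_. M)" and ?V = "\<lambda>z. restrict (\<lambda>j. V (z j)) I"
  have img: "?V ` space ?N = PiE I (\<lambda>_. V ` space M)"
  proof (intro set_eqI iffI)
    fix v assume "v \<in> PiE I (\<lambda>_. V ` space M)"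
    then have "\<forall>j\<in>I. \<exists>x\<in>space M. v j = V x" by (auto simp: PiE_iff)
    then obtain z where "\<forall>j\<in>I. z j \<in> space M \<and> v j = V (z j)" by metis
    then have "restrict z I \<in> space ?N" "?V (restrict z I) = v"
      using \<open>v \<in> PiE I _\<close> by (auto simp: space_PiM PiE_iff extensional_def)
    then show "v \<in> ?V ` space ?N" by (metis image_eqI)
  qed (auto simp: space_PiM PiE_iff)
  have pp: "point_prob ?N ?V v = (\<Prod>j\<in>I. point_prob M V (v j))" if "v \<in> PiE I (\<lambda>_. V ` space M)" for v
  proof -
    have "?V -` {v} \<inter> space ?N = PiE I (\<lambda>j. V -` {v j} \<inter> space M)"
      using that by (auto simp: space_PiM PiE_iff extensional_def fun_eq_iff)
    then show ?thesis
      unfolding point_prob_def by (simp add: finite_measure_PiM_emb simple_function_vimage_singleton[OF V])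
  qed
  have "sf_entropy ?N ?V = (\<Sum>v\<in>PiE I (\<lambda>_. V ` space M). entr_fun (\<Prod>j\<in>I. point_prob M V (v j)))"
    unfolding sf_entropy_def img by (intro sum.cong refl) (simp add: pp)
  also have "\<dots> = real (card I) * sf_entropy M V"
    unfolding sf_entropy_def using V sum_point_prob_eq_1[OF prob V]
    by (intro sum_entr_fun_prod_PiE I) (auto simp: simple_function_def point_prob_nonneg)
  finally show ?thesis .
qed

definition prod_partition :: "'i set \<Rightarrow> 'b set set \<Rightarrow> ('i \<Rightarrow> 'b) set set" where
  "prod_partition I P = {PiE I C | C. \<forall>j\<in>I. C j \<in> P}"

lemma prod_partition_eq_image: "prod_partition I P = (\<lambda>C. PiE I C) ` PiE I (\<lambda>_. P)"
proof (intro set_eqI iffI)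
  fix X assume "X \<in> prod_partition I P"
  then obtain C where C: "\<forall>j\<in>I. C j \<in> P" "X = PiE I C" by (auto simp: prod_partition_def)
  then have "X = PiE I (restrict C I)" by (auto intro!: PiE_cong)
  then show "X \<in> (\<lambda>C. PiE I C) ` PiE I (\<lambda>_. P)" using C by auto
qed (auto simp: prod_partition_def PiE_iff)

lemma cell_of_prod_partition_mem:
  assumes Q: "fin_partition M Q" and z: "z \<in> space (PiM I (\<lambda>_. M))"
  shows "z \<in> PiE I (\<lambda>j. cell_of Q (z j))" "PiE I (\<lambda>j. cell_of Q (z j)) \<in> prod_partition I Q"
  using cell_of_mem[OF Q] z by (auto simp: space_PiM prod_partition_def PiE_iff)

lemma fin_partition_prod_partition:
  assumes Q: "fin_partition M Q" and I: "finite I"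
  shows "fin_partition (PiM I (\<lambda>_. M)) (prod_partition I Q)"
  unfolding fin_partition_def
proof (intro conjI ballI impI)
  show "finite (prod_partition I Q)"
    using Q I by (simp add: prod_partition_eq_image fin_partition_def finite_PiE)
  show "prod_partition I Q \<subseteq> sets (PiM I (\<lambda>_. M))"
    using Q I by (auto simp: prod_partition_def fin_partition_def intro!: sets_PiM_I_finite)
  show "\<Union> (prod_partition I Q) = space (PiM I (\<lambda>_. M))"
  proof (intro set_eqI iffI)
    fix z assume "z \<in> \<Union> (prod_partition I Q)"
    then show "z \<in> space (PiM I (\<lambda>_. M))"
      using Q by (auto simp: prod_partition_def space_PiM PiE_iff fin_partition_def) blast
  next
    fix z assume "z \<in> space (PiM I (\<lambda>_. M))"
    then show "z \<in> \<Union> (prod_partition I Q)" using cell_of_prod_partition_mem[OF Q] by blast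
  qed
next
  fix X Y assume "X \<in> prod_partition I Q" "Y \<in> prod_partition I Q" "X \<noteq> Y"
  then obtain C D where C: "\<forall>j\<in>I. C j \<in> Q" "X = PiE I C" and D: "\<forall>j\<in>I. D j \<in> Q" "Y = PiE I D"
    by (auto simp: prod_partition_def)
  show "X \<inter> Y = {}"
  proof (rule ccontr)
    assume "X \<inter> Y \<noteq> {}"
    then obtain z where "z \<in> X" "z \<in> Y" by blast
    then have "\<forall>j\<in>I. C j = D j"
      using C D Q unfolding fin_partition_def by (metis PiE_mem disjoint_iff)
    then show False using C D \<open>X \<noteq> Y\<close> by (auto intro!: PiE_cong)
  qed
qed

lemma cell_of_prod_partition:
  assumes Q: "fin_partition M Q" and I: "finite I" and z: "z \<in> space (PiM I (\<lambda>_. M))"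
  shows "cell_of (prod_partition I Q) z = PiE I (\<lambda>j. cell_of Q (z j))"
  using cell_of_eq_iff[OF fin_partition_prod_partition[OF Q I] z] cell_of_prod_partition_mem[OF Q z]
  by blast

lemma distr_measure_preserving:
  assumes "prob_space M" "measure_preserving M S"
  shows "distr M M S = M"
proof (rule measure_eqI)
  interpret prob_space M by fact
  have S: "S \<in> M \<rightarrow>\<^sub>M M" using assms(2) by (simp add: measure_preserving_def)
  fix A assume "A \<in> sets (distr M M S)"
  then have A: "A \<in> sets M" by simp
  have "emeasure (distr M M S) A = emeasure M (S -` A \<inter> space M)"
    by (rule emeasure_distr[OF S A])
  also have "\<dots> = emeasure M A"
    using assms(2) A by (simp add: measure_preserving_def emeasure_eq_measure)
  finally show "emeasure (distr M M S) A = emeasure M A" .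
qed simp

lemma measure_preserving_PiM:
  assumes prob: "prob_space M" and S: "measure_preserving M S" and I: "finite I"
  shows "measure_preserving (PiM I (\<lambda>_. M)) (\<lambda>x. restrict (\<lambda>i. S (x i)) I)"
proof -
  let ?N = "PiM I (\<lambda>_. M)" and ?S = "\<lambda>x. restrict (\<lambda>i. S (x i)) I"
  have [measurable]: "S \<in> M \<rightarrow>\<^sub>M M" using S by (simp add: measure_preserving_def)
  have meas: "?S \<in> ?N \<rightarrow>\<^sub>M ?N" by measurable
  have "distr ?N ?N (compose I S) = PiM I (\<lambda>_. distr M M S)"
    by (rule distr_PiM_finite_prob_space') (use I prob in auto)
  moreover have "compose I S = ?S" by (simp add: compose_def fun_eq_iff)
  ultimately have "distr ?N ?N ?S = ?N" by (simp add: distr_measure_preserving[OF prob S])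
  then show ?thesis
    unfolding measure_preserving_def using measure_distr[OF meas] meas by simp
qed

lemma fiter_PiM:
  assumes "z \<in> space (PiM I (\<lambda>_. M))"
  shows "fiter (\<lambda>n x. restrict (\<lambda>j. T n (x j)) I) i m z = restrict (\<lambda>j. fiter T i m (z j)) I"
proof (induction m)
  case 0
  then show ?case using assms by (auto simp: space_PiM PiE_iff extensional_def fun_eq_iff)
qed (auto simp: fun_eq_iff)

lemma itinerary_prod_partition_eq_iff:
  assumes Q: "fin_partition M Q" and I: "finite I" and T: "\<And>m. fiter T 0 m \<in> M \<rightarrow>\<^sub>M M"
    and z: "z \<in> space (PiM I (\<lambda>_. M))" and z': "z' \<in> space (PiM I (\<lambda>_. M))"
  shows "itinerary (prod_partition I Q) (\<lambda>n x. restrict (\<lambda>j. T n (x j)) I) a n z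
       = itinerary (prod_partition I Q) (\<lambda>n x. restrict (\<lambda>j. T n (x j)) I) a n z'
     \<longleftrightarrow> restrict (\<lambda>j. itinerary Q T a n (z j)) I = restrict (\<lambda>j. itinerary Q T a n (z' j)) I"
proof -
  let ?T = "\<lambda>n x. restrict (\<lambda>j. T n (x j)) I"
  have sp: "fiter T 0 m x \<in> space M" if "x \<in> space M" for m x
    using measurable_space[OF T that] .
  have cell: "cell_of (prod_partition I Q) (fiter ?T 0 m y) = PiE I (\<lambda>j. cell_of Q (fiter T 0 m (y j)))"
    if y: "y \<in> space (PiM I (\<lambda>_. M))" for m y
  proof -
    have "fiter ?T 0 m y \<in> space (PiM I (\<lambda>_. M))"
      using y sp unfolding fiter_PiM[OF y] by (auto simp: space_PiM)
    then show ?thesis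
      using y by (simp add: cell_of_prod_partition[OF Q I] fiter_PiM[OF y] cong: PiE_cong)
  qed
  have nonempty: "cell_of Q (fiter T 0 m (y j)) \<noteq> {}" if "y \<in> space (PiM I (\<lambda>_. M))" "j \<in> I" for m y j
    using cell_of_mem(2)[OF Q sp] that by (auto simp: space_PiM)
  show ?thesis
    using nonempty[OF z] nonempty[OF z']
    by (auto simp: itinerary_def cell[OF z] cell[OF z'] map_eq_conv PiE_eq_iff fun_eq_iff)
qed

lemma part_entropy_seq_join_prod_partition:
  assumes prob: "prob_space M" and Q: "fin_partition M Q" and I: "finite I"
    and T: "\<And>n. measure_preserving M (T n)"
  shows "part_entropy (PiM I (\<lambda>_. M)) (seq_join (PiM I (\<lambda>_. M)) (\<lambda>n x. restrict (\<lambda>j. T n (x j)) I) a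
         (prod_partition I Q) n)
       = real (card I) * part_entropy M (seq_join M T a Q n)"
proof -
  let ?N = "PiM I (\<lambda>_. M)" and ?T = "\<lambda>n x. restrict (\<lambda>j. T n (x j)) I"
  have TN: "fiter ?T 0 m \<in> ?N \<rightarrow>\<^sub>M ?N" for m
    by (rule measurable_fiter) (rule measure_preserving_PiM[OF prob T I])
  have "part_entropy ?N (seq_join ?N ?T a (prod_partition I Q) n)
      = sf_entropy ?N (itinerary (prod_partition I Q) ?T a n)"
    by (rule part_entropy_seq_join[OF fin_partition_prod_partition[OF Q I] TN])
  also have "\<dots> = sf_entropy ?N (\<lambda>z. restrict (\<lambda>j. itinerary Q T a n (z j)) I)"
    by (rule sf_entropy_cong_fibres[OF prob_space_PiM[OF prob]
          simple_function_itinerary[OF fin_partition_prod_partition[OF Q I] TN]])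
      (rule itinerary_prod_partition_eq_iff[OF Q I measurable_fiter[OF T]])
  also have "\<dots> = real (card I) * sf_entropy M (itinerary Q T a n)"
    by (rule sf_entropy_PiM[OF prob simple_function_itinerary[OF Q measurable_fiter[OF T]] I])
  finally show ?thesis by (simp add: part_entropy_seq_join[OF Q measurable_fiter[OF T]])
qed

lemma seq_entropy_part_prod_partition:
  assumes "prob_space M" "fin_partition M Q" "finite I" "\<And>n. measure_preserving M (T n)"
  shows "seq_entropy_part (PiM I (\<lambda>_. M)) (\<lambda>n x. restrict (\<lambda>j. T n (x j)) I) a (prod_partition I Q)
       = ereal (real (card I)) * seq_entropy_part M T a Q"
proof -
  have "(\<lambda>n. ereal (real (card I) * part_entropy M (seq_join M T a Q n) / real n))
      = (\<lambda>n. ereal (real (card I)) * ereal (part_entropy M (seq_join M T a Q n) / real n))"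
    by simp
  then show ?thesis
    unfolding seq_entropy_part_def part_entropy_seq_join_prod_partition[OF assms]
    by (simp only:) (rule limsup_ereal_mult_left, simp)
qed

section \<open>Approximation by finitely generated product partitions\<close>

definition pattern :: "'b set set \<Rightarrow> 'b \<Rightarrow> 'b set set" where
  "pattern F y = {B\<in>F. y \<in> B}"

definition atoms :: "'b set \<Rightarrow> 'b set set \<Rightarrow> 'b set set" where
  "atoms \<Omega> F = (\<lambda>S. {y\<in>\<Omega>. pattern F y = S}) ` pattern F ` \<Omega>"

lemma space_Int_INTER_in_sets:
  assumes "finite J" "\<And>i. i \<in> J \<Longrightarrow> A i \<in> sets M"
  shows "space M \<inter> (\<Inter>i\<in>J. A i) \<in> sets M"
  using assms
proof (induction J rule: finite_induct)
  case (insert i J)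
  have "space M \<inter> (\<Inter>x\<in>insert i J. A x) = A i \<inter> (space M \<inter> (\<Inter>i\<in>J. A i))" by auto
  then show ?case using insert by auto
qed simp

lemma fin_partition_atoms:
  assumes F: "finite F" "F \<subseteq> sets M"
  shows "fin_partition M (atoms (space M) F)"
  unfolding fin_partition_def
proof (intro conjI ballI impI)
  have "pattern F ` space M \<subseteq> Pow F" by (auto simp: pattern_def)
  then have "finite (pattern F ` space M)" using F by (metis finite_Pow_iff finite_subset)
  then show "finite (atoms (space M) F)" by (simp add: atoms_def)
  show "atoms (space M) F \<subseteq> sets M"
  proof
    fix X assume "X \<in> atoms (space M) F"
    then obtain y where X: "X = {y'\<in>space M. pattern F y' = pattern F y}" by (auto simp: atoms_def)
    have "X = space M \<inter> (\<Inter>B\<in>F. if y \<in> B then B else space M - B)"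
      unfolding X pattern_def by (auto split: if_splits)
    also have "\<dots> \<in> sets M" by (rule space_Int_INTER_in_sets) (use F in auto)
    finally show "X \<in> sets M" .
  qed
  show "\<Union> (atoms (space M) F) = space M" by (auto simp: atoms_def)
next
  fix C D assume "C \<in> atoms (space M) F" "D \<in> atoms (space M) F" "C \<noteq> D"
  then obtain y y' where "C = {x\<in>space M. pattern F x = pattern F y}" "D = {x\<in>space M. pattern F x = pattern F y'}"
    by (auto simp: atoms_def)
  with \<open>C \<noteq> D\<close> show "C \<inter> D = {}" by auto
qed

lemma cell_of_atoms:
  assumes F: "finite F" "F \<subseteq> sets M" and y: "y \<in> space M"
  shows "cell_of (atoms (space M) F) y = {y'\<in>space M. pattern F y' = pattern F y}"
  using cell_of_eq_iff[OF fin_partition_atoms[OF F] y] y by (auto simp: atoms_def)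

locale finite_power_space =
  fixes M :: "'b measure" and I :: "'i set"
  assumes prob: "prob_space M" and finite_I: "finite I"
begin

abbreviation N :: "('i \<Rightarrow> 'b) measure" where
  "N \<equiv> PiM I (\<lambda>_. M)"

lemma prob_space_N: "prob_space N"
  by (rule prob_space_PiM) (rule prob)

lemma mem_cell_of_prod_atoms_iff:
  assumes F: "finite F" "F \<subseteq> sets M" and z: "z \<in> space N"
  shows "z' \<in> cell_of (prod_partition I (atoms (space M) F)) z
     \<longleftrightarrow> z' \<in> space N \<and> (\<forall>j\<in>I. pattern F (z' j) = pattern F (z j))"
  using z unfolding cell_of_prod_partition[OF fin_partition_atoms[OF F] finite_I z]
  by (auto simp: space_PiM PiE_iff cell_of_atoms[OF F])

definition determined_by :: "'b set set \<Rightarrow> ('i \<Rightarrow> 'b) set \<Rightarrow> bool" where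
  "determined_by F R \<longleftrightarrow> (\<forall>z\<in>space N. \<forall>z'\<in>space N.
     (\<forall>j\<in>I. pattern F (z j) = pattern F (z' j)) \<longrightarrow> (z \<in> R \<longleftrightarrow> z' \<in> R))"

lemma determined_by_mono:
  assumes "determined_by F R" "F \<subseteq> F'"
  shows "determined_by F' R"
proof -
  have "pattern F y = pattern F' y \<inter> F" for y using assms(2) by (auto simp: pattern_def)
  then show ?thesis using assms(1) unfolding determined_by_def by metis
qed

definition approximable :: "('i \<Rightarrow> 'b) set \<Rightarrow> bool" where
  "approximable E \<longleftrightarrow> (\<forall>\<delta>>0. \<exists>F R. finite F \<and> F \<subseteq> sets M \<and> R \<in> sets N \<and> determined_by F R
     \<and> measure N (sym_diff E R) < \<delta>)"

lemma approximableD: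
  assumes "approximable E" "0 < \<delta>"
  obtains F R where "finite F" "F \<subseteq> sets M" "R \<in> sets N" "determined_by F R"
    "measure N (sym_diff E R) < \<delta>"
proof -
  have "\<exists>F R. finite F \<and> F \<subseteq> sets M \<and> R \<in> sets N \<and> determined_by F R
      \<and> measure N (sym_diff E R) < \<delta>"
    using assms unfolding approximable_def by simp
  then show thesis by (elim exE conjE) (rule that; assumption)
qed

lemma approximable_cylinder:
  assumes "i \<in> I" "A \<in> sets M"
  shows "approximable {z\<in>space N. z i \<in> A}"
proof -
  let ?E = "{z\<in>space N. z i \<in> A}"
  have "(\<lambda>z. z i) -` A \<inter> space N \<in> sets N"
    using measurable_component_singleton[OF assms(1)] assms(2) by (rule measurable_sets)
  moreover have "?E = (\<lambda>z. z i) -` A \<inter> space N" by auto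
  ultimately have E: "?E \<in> sets N" by simp
  have "determined_by {A} ?E"
    unfolding determined_by_def
  proof (intro ballI impI)
    fix z z' assume "z \<in> space N" "z' \<in> space N" "\<forall>j\<in>I. pattern {A} (z j) = pattern {A} (z' j)"
    then show "z \<in> ?E \<longleftrightarrow> z' \<in> ?E"
      using assms(1) by (auto simp: pattern_def split: if_splits)
  qed
  then show ?thesis
    unfolding approximable_def using E assms(2) by (intro allI impI exI[of _ "{A}"] exI[of _ ?E]) simp
qed

lemma approximable_empty: "approximable {}"
proof -
  have "determined_by {} {}" by (simp add: determined_by_def)
  then show ?thesis unfolding approximable_def by (intro allI impI exI[of _ "{}"]) auto
qed

lemma approximable_Compl:
  assumes "E \<in> sets N" "approximable E"
  shows "approximable (space N - E)"
  unfolding approximable_def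
proof (intro allI impI)
  fix \<delta> :: real assume "0 < \<delta>"
  with assms(2) obtain F R where FR: "finite F" "F \<subseteq> sets M" "R \<in> sets N" "determined_by F R"
    "measure N (sym_diff E R) < \<delta>"
    by (rule approximableD)
  have "determined_by F (space N - R)"
    unfolding determined_by_def
  proof (intro ballI impI)
    fix z z' assume z: "z \<in> space N" "z' \<in> space N" "\<forall>j\<in>I. pattern F (z j) = pattern F (z' j)"
    then have "z \<in> R \<longleftrightarrow> z' \<in> R" using FR(4) unfolding determined_by_def by blast
    then show "z \<in> space N - R \<longleftrightarrow> z' \<in> space N - R" using z by blast
  qed
  moreover have "sym_diff (space N - E) (space N - R) = sym_diff E R"
    using sets.sets_into_space[OF assms(1)] sets.sets_into_space[OF FR(3)] by blast
  then have "measure N (sym_diff (space N - E) (space N - R)) < \<delta>" using FR(5) by (simp only:)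
  ultimately show "\<exists>F R. finite F \<and> F \<subseteq> sets M \<and> R \<in> sets N \<and> determined_by F R
      \<and> measure N (sym_diff (space N - E) R) < \<delta>"
    using FR(1-3) sets.compl_sets[OF FR(3)] by blast
qed

lemma approximable_Un:
  assumes "A \<in> sets N" "approximable A" "B \<in> sets N" "approximable B"
  shows "approximable (A \<union> B)"
  unfolding approximable_def
proof (intro allI impI)
  interpret prob_space N by (rule prob_space_N)
  fix \<delta> :: real assume "0 < \<delta>"
  then have "0 < \<delta> / 2" by simp
  obtain F R where FR: "finite F" "F \<subseteq> sets M" "R \<in> sets N" "determined_by F R"
      "measure N (sym_diff A R) < \<delta> / 2"
    using approximableD[OF assms(2) \<open>0 < \<delta> / 2\<close>] .
  obtain F' R' where FR': "finite F'" "F' \<subseteq> sets M" "R' \<in> sets N" "determined_by F' R'"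
      "measure N (sym_diff B R') < \<delta> / 2"
    using approximableD[OF assms(4) \<open>0 < \<delta> / 2\<close>] .
  have "determined_by (F \<union> F') (R \<union> R')"
    using determined_by_mono[OF FR(4), of "F \<union> F'"] determined_by_mono[OF FR'(4), of "F \<union> F'"]
    unfolding determined_by_def by blast
  moreover have "measure N (sym_diff (A \<union> B) (R \<union> R')) \<le> measure N (sym_diff A R \<union> sym_diff B R')"
    using assms(1,3) FR(3) FR'(3) by (intro finite_measure_mono) auto
  moreover have "measure N (sym_diff A R \<union> sym_diff B R') \<le> measure N (sym_diff A R) + measure N (sym_diff B R')"
    using assms(1,3) FR(3) FR'(3) by (intro measure_Un_le) auto
  ultimately show "\<exists>F R. finite F \<and> F \<subseteq> sets M \<and> R \<in> sets N \<and> determined_by F R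
      \<and> measure N (sym_diff (A \<union> B) R) < \<delta>"
    using FR FR' by (intro exI[of _ "F \<union> F'"] exI[of _ "R \<union> R'"]) auto
qed

lemma approximable_UN_lessThan:
  fixes e :: "nat \<Rightarrow> ('i \<Rightarrow> 'b) set"
  assumes "\<And>n. e n \<in> sets N" "\<And>n. approximable (e n)"
  shows "approximable (\<Union>n<m. e n)"
proof (induction m)
  case 0
  then show ?case using approximable_empty by simp
next
  case (Suc m)
  have "(\<Union>n<Suc m. e n) = (\<Union>n<m. e n) \<union> e m" by (auto simp: lessThan_Suc)
  then show ?case using assms Suc by (auto intro!: approximable_Un)
qed

lemma approximable_if_close:
  assumes E: "E \<in> sets N"
    and close: "\<And>\<delta>. 0 < \<delta> \<Longrightarrow> \<exists>E'\<in>sets N. approximable E' \<and> measure N (sym_diff E E') < \<delta>"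
  shows "approximable E"
  unfolding approximable_def
proof (intro allI impI)
  interpret prob_space N by (rule prob_space_N)
  fix \<delta> :: real assume "0 < \<delta>"
  then have "0 < \<delta> / 2" by simp
  then obtain E' where E': "E' \<in> sets N" "approximable E'" "measure N (sym_diff E E') < \<delta> / 2"
    using close by blast
  obtain F R where FR: "finite F" "F \<subseteq> sets M" "R \<in> sets N" "determined_by F R"
      "measure N (sym_diff E' R) < \<delta> / 2"
    using approximableD[OF E'(2) \<open>0 < \<delta> / 2\<close>] .
  have "measure N (sym_diff E R) \<le> measure N (sym_diff E E' \<union> sym_diff E' R)"
    using E E'(1) FR(3) by (intro finite_measure_mono) auto
  also have "\<dots> \<le> measure N (sym_diff E E') + measure N (sym_diff E' R)"
    using E E'(1) FR(3) by (intro measure_Un_le) auto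
  finally show "\<exists>F R. finite F \<and> F \<subseteq> sets M \<and> R \<in> sets N \<and> determined_by F R
      \<and> measure N (sym_diff E R) < \<delta>"
    using FR E'(3) by (intro exI[of _ F] exI[of _ R]) auto
qed

lemma approximable_UN:
  fixes e :: "nat \<Rightarrow> ('i \<Rightarrow> 'b) set"
  assumes e: "\<And>n. e n \<in> sets N" "\<And>n. approximable (e n)"
  shows "approximable (\<Union>n. e n)"
proof (rule approximable_if_close)
  interpret prob_space N by (rule prob_space_N)
  show "(\<Union>n. e n) \<in> sets N" using e by auto
  fix \<delta> :: real assume "0 < \<delta>"
  have "incseq (\<lambda>m. \<Union>n<m. e n)"
    unfolding incseq_def by (meson UN_mono lessThan_subset_iff order_refl)
  moreover have "(\<Union>m. \<Union>n<m. e n) = (\<Union>n. e n)" by auto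
  moreover have "range (\<lambda>m. \<Union>n<m. e n) \<subseteq> sets N" using e by auto
  ultimately have "(\<lambda>m. measure N (\<Union>n<m. e n)) \<longlonglongrightarrow> measure N (\<Union>n. e n)"
    using finite_Lim_measure_incseq[of "\<lambda>m. \<Union>n<m. e n"] by simp
  then obtain m where m: "dist (measure N (\<Union>n<m. e n)) (measure N (\<Union>n. e n)) < \<delta>"
    using \<open>0 < \<delta>\<close> unfolding LIMSEQ_def by blast
  have "measure N ((\<Union>n. e n) - (\<Union>n<m. e n)) = measure N (\<Union>n. e n) - measure N (\<Union>n<m. e n)"
    using e by (intro finite_measure_Diff) auto
  then have "measure N ((\<Union>n. e n) - (\<Union>n<m. e n)) < \<delta>"
    using m unfolding dist_real_def by arith
  moreover have "sym_diff (\<Union>n. e n) (\<Union>n<m. e n) = (\<Union>n. e n) - (\<Union>n<m. e n)" by auto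
  ultimately have "measure N (sym_diff (\<Union>n. e n) (\<Union>n<m. e n)) < \<delta>" by simp
  then show "\<exists>E'\<in>sets N. approximable E' \<and> measure N (sym_diff (\<Union>n. e n) E') < \<delta>"
    using e by (intro bexI[of _ "\<Union>n<m. e n"] conjI approximable_UN_lessThan) auto
qed

lemma approximable_sets_N:
  assumes "E \<in> sets N"
  shows "approximable E"
proof -
  let ?G = "{{z\<in>PiE I (\<lambda>_. space M). z i \<in> A} | i A. i \<in> I \<and> A \<in> sets M}"
  have sets_N: "sets N = sigma_sets (space N) ?G"
    by (simp add: sets_PiM_single space_PiM)
  have "E \<in> sigma_sets (space N) ?G" using assms sets_N by simp
  then show ?thesis
  proof (induction rule: sigma_sets.induct)
    case (Basic a)
    then show ?case using approximable_cylinder by (auto simp: space_PiM)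
  next
    case Empty
    show ?case by (rule approximable_empty)
  next
    case (Compl a)
    then show ?case using approximable_Compl sets_N by simp
  next
    case (Union e)
    then show ?case using approximable_UN sets_N by simp
  qed
qed

lemma exists_determined_approximations:
  assumes \<zeta>: "finite \<zeta>" "\<zeta> \<subseteq> sets N" and \<delta>: "0 < \<delta>"
  obtains F R where "finite F" "F \<subseteq> sets M" "\<And>E. E \<in> \<zeta> \<Longrightarrow> R E \<in> sets N"
    "\<And>E. E \<in> \<zeta> \<Longrightarrow> determined_by F (R E)" "\<And>E. E \<in> \<zeta> \<Longrightarrow> measure N (sym_diff E (R E)) < \<delta>"
proof -
  have "\<forall>E\<in>\<zeta>. \<exists>FR. finite (fst FR) \<and> fst FR \<subseteq> sets M \<and> snd FR \<in> sets N
      \<and> determined_by (fst FR) (snd FR) \<and> measure N (sym_diff E (snd FR)) < \<delta>"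
  proof
    fix E assume "E \<in> \<zeta>"
    then have "approximable E" using \<zeta>(2) approximable_sets_N by blast
    then obtain F R where "finite F" "F \<subseteq> sets M" "R \<in> sets N" "determined_by F R"
      "measure N (sym_diff E R) < \<delta>"
      using \<delta> by (rule approximableD)
    then show "\<exists>FR. finite (fst FR) \<and> fst FR \<subseteq> sets M \<and> snd FR \<in> sets N
      \<and> determined_by (fst FR) (snd FR) \<and> measure N (sym_diff E (snd FR)) < \<delta>"
      by (intro exI[of _ "(F, R)"]) simp
  qed
  from bchoice[OF this] obtain FR where FR: "\<forall>E\<in>\<zeta>. finite (fst (FR E)) \<and> fst (FR E) \<subseteq> sets M
      \<and> snd (FR E) \<in> sets N \<and> determined_by (fst (FR E)) (snd (FR E))
      \<and> measure N (sym_diff E (snd (FR E))) < \<delta>" by blast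
  show thesis
  proof (rule that[of "\<Union>E\<in>\<zeta>. fst (FR E)" "\<lambda>E. snd (FR E)"])
    show "finite (\<Union>E\<in>\<zeta>. fst (FR E))" "(\<Union>E\<in>\<zeta>. fst (FR E)) \<subseteq> sets M"
      using FR \<zeta>(1) by auto
    show "determined_by (\<Union>E\<in>\<zeta>. fst (FR E)) (snd (FR E))" if "E \<in> \<zeta>" for E
      using FR that by (auto intro: determined_by_mono[of "fst (FR E)"])
  qed (use FR in simp_all)
qed

text \<open>Since R E is determined by F, every cell of the product partition generated by F lies either
  inside R E or outside it; a point whose \<zeta>-cell is guessed wrongly therefore lies in some
  sym_diff E (R E).\<close>
lemma guess_error_subset:
  fixes \<zeta> :: "('i \<Rightarrow> 'b) set set"
  assumes \<zeta>: "fin_partition N \<zeta>" and F: "finite F" "F \<subseteq> sets M"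
    and R: "\<And>E. E \<in> \<zeta> \<Longrightarrow> determined_by F (R E)"
  defines "\<eta> \<equiv> prod_partition I (atoms (space M) F)"
    and "guess \<equiv> \<lambda>G. if \<exists>E\<in>\<zeta>. G \<subseteq> R E then SOME E. E \<in> \<zeta> \<and> G \<subseteq> R E else {}"
  shows "{x\<in>space N. cell_of \<zeta> x \<noteq> guess (cell_of \<eta> x)} \<subseteq> (\<Union>E\<in>\<zeta>. sym_diff E (R E))"
proof
  fix x assume "x \<in> {x\<in>space N. cell_of \<zeta> x \<noteq> guess (cell_of \<eta> x)}"
  then have x: "x \<in> space N" and wrong: "cell_of \<zeta> x \<noteq> guess (cell_of \<eta> x)" by auto
  define E0 where "E0 = cell_of \<zeta> x"
  define G where "G = cell_of \<eta> x"
  have E0: "E0 \<in> \<zeta>" "x \<in> E0" using cell_of_mem[OF \<zeta> x] by (simp_all add: E0_def)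
  have xG: "x \<in> G"
    using cell_of_mem(2)[OF fin_partition_prod_partition[OF fin_partition_atoms[OF F] finite_I] x]
    by (simp add: G_def \<eta>_def)
  show "x \<in> (\<Union>E\<in>\<zeta>. sym_diff E (R E))"
  proof (cases "\<exists>E\<in>\<zeta>. G \<subseteq> R E")
    case True
    define E1 where "E1 = (SOME E. E \<in> \<zeta> \<and> G \<subseteq> R E)"
    have E1: "E1 \<in> \<zeta>" "G \<subseteq> R E1" unfolding E1_def using someI_ex[of "\<lambda>E. E \<in> \<zeta> \<and> G \<subseteq> R E"] True
      by blast+
    have "E1 \<noteq> E0" using wrong True by (simp add: guess_def E0_def G_def E1_def)
    then have "x \<notin> E1" using cell_of_eq_iff[OF \<zeta> x E1(1)] by (simp add: E0_def)
    then show ?thesis using E1 xG by blast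
  next
    case False
    have "x \<notin> R E0"
    proof
      assume "x \<in> R E0"
      have "G \<subseteq> R E0"
      proof
        fix z' assume "z' \<in> G"
        then have "z' \<in> space N" "\<forall>j\<in>I. pattern F (z' j) = pattern F (x j)"
          using mem_cell_of_prod_atoms_iff[OF F x] by (simp_all add: G_def \<eta>_def)
        then show "z' \<in> R E0" using R[OF E0(1)] \<open>x \<in> R E0\<close> x unfolding determined_by_def by blast
      qed
      then show False using False E0 by blast
    qed
    then show ?thesis using E0 by blast
  qed
qed

lemma exists_atoms_cond_entropy_le:
  assumes \<zeta>: "fin_partition N \<zeta>" and \<epsilon>: "0 < \<epsilon>"
  obtains F where "finite F" "F \<subseteq> sets M"
    "sf_entropy N (\<lambda>x. (cell_of \<zeta> x, cell_of (prod_partition I (atoms (space M) F)) x))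
       - sf_entropy N (cell_of (prod_partition I (atoms (space M) F))) \<le> \<epsilon>"
proof -
  interpret N: prob_space N by (rule prob_space_N)
  define m where "m = card (cell_of \<zeta> ` space N)"
  define c where "c = \<epsilon> / (2 * (real m + 1))"
  define L where "L = \<bar>ln (1 / c)\<bar>"
  define \<delta> where "\<delta> = \<epsilon> / (2 * (1 + L) * (real (card \<zeta>) + 1))"
  have c: "0 < c" and \<delta>: "0 < \<delta>" using \<epsilon> by (simp_all add: c_def \<delta>_def L_def)
  have fin\<zeta>: "finite \<zeta>" "\<zeta> \<subseteq> sets N" using \<zeta> by (simp_all add: fin_partition_def)
  obtain F R where F: "finite F" "F \<subseteq> sets M" and R: "\<And>E. E \<in> \<zeta> \<Longrightarrow> R E \<in> sets N"
    and det: "\<And>E. E \<in> \<zeta> \<Longrightarrow> determined_by F (R E)"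
    and close: "\<And>E. E \<in> \<zeta> \<Longrightarrow> measure N (sym_diff E (R E)) < \<delta>"
    using exists_determined_approximations[OF fin\<zeta> \<delta>] by blast
  define \<eta> where "\<eta> = prod_partition I (atoms (space M) F)"
  define guess where "guess G = (if \<exists>E\<in>\<zeta>. G \<subseteq> R E then SOME E. E \<in> \<zeta> \<and> G \<subseteq> R E else {})" for G
  define D where "D = measure N {x\<in>space N. cell_of \<zeta> x \<noteq> guess (cell_of \<eta> x)}"
  have \<eta>: "fin_partition N \<eta>"
    unfolding \<eta>_def by (rule fin_partition_prod_partition[OF fin_partition_atoms[OF F] finite_I])
  have sdN: "sym_diff E (R E) \<in> sets N" if "E \<in> \<zeta>" for E
    using R[OF that] that fin\<zeta> by auto
  have "D \<le> measure N (\<Union>E\<in>\<zeta>. sym_diff E (R E))"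
    unfolding D_def guess_def[abs_def] \<eta>_def
    using guess_error_subset[OF \<zeta> F det] sdN fin\<zeta> by (intro N.finite_measure_mono) auto
  also have "\<dots> \<le> (\<Sum>E\<in>\<zeta>. measure N (sym_diff E (R E)))"
    by (rule measure_UNION_le[OF fin\<zeta>(1) sdN])
  also have "\<dots> \<le> (\<Sum>E\<in>\<zeta>. \<delta>)" using close by (intro sum_mono) (simp add: less_imp_le)
  finally have "D * (1 + L) \<le> real (card \<zeta>) * \<delta> * (1 + L)"
    by (intro mult_right_mono) (auto simp: L_def)
  also have "\<dots> = \<epsilon> / 2 * (real (card \<zeta>) / (real (card \<zeta>) + 1))"
    unfolding \<delta>_def by (simp add: L_def field_simps add_nonneg_eq_0_iff)
  also have "\<dots> \<le> \<epsilon> / 2" using \<epsilon> by (intro mult_left_le) auto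
  finally have "D * (1 + L) \<le> \<epsilon> / 2" .
  moreover have "D * (1 + ln (1 / c)) \<le> D * (1 + L)"
    by (intro mult_left_mono) (auto simp: L_def D_def)
  ultimately have D: "D * (1 + ln (1 / c)) \<le> \<epsilon> / 2" by linarith
  have "c * m \<le> \<epsilon> / 2" using \<epsilon> by (simp add: c_def field_simps)
  then have "sf_entropy N (\<lambda>x. (cell_of \<zeta> x, cell_of \<eta> x)) - sf_entropy N (cell_of \<eta>) \<le> \<epsilon>"
    using sf_entropy_pair_diff_le_guess_error[OF prob_space_N simple_function_cell_of[OF \<zeta>]
        simple_function_cell_of[OF \<eta>] c, of guess] D
    unfolding D_def m_def by linarith
  then show thesis using that F unfolding \<eta>_def by blast
qed

lemma seq_entropy_part_power_le:
  assumes T: "\<And>n. measure_preserving M (T n)" and \<zeta>: "fin_partition N \<zeta>"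
  shows "seq_entropy_part N (\<lambda>n x. restrict (\<lambda>j. T n (x j)) I) a \<zeta> \<le> ereal (real (card I)) * seq_entropy M T a"
proof (rule ereal_le_epsilon2)
  let ?T = "\<lambda>n x. restrict (\<lambda>j. T n (x j)) I"
  fix \<epsilon> :: real assume "0 < \<epsilon>"
  then obtain F where F: "finite F" "F \<subseteq> sets M"
    and H: "sf_entropy N (\<lambda>x. (cell_of \<zeta> x, cell_of (prod_partition I (atoms (space M) F)) x))
      - sf_entropy N (cell_of (prod_partition I (atoms (space M) F))) \<le> \<epsilon>"
    using exists_atoms_cond_entropy_le[OF \<zeta>] by blast
  note Q = fin_partition_atoms[OF F]
  have "seq_entropy_part N ?T a \<zeta> \<le> seq_entropy_part N ?T a (prod_partition I (atoms (space M) F))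
      + ereal (sf_entropy N (\<lambda>x. (cell_of \<zeta> x, cell_of (prod_partition I (atoms (space M) F)) x))
      - sf_entropy N (cell_of (prod_partition I (atoms (space M) F))))"
    by (rule seq_entropy_part_le[OF prob_space_N measure_preserving_PiM[OF prob T finite_I] \<zeta>
          fin_partition_prod_partition[OF Q finite_I]])
  also have "\<dots> \<le> ereal (real (card I)) * seq_entropy_part M T a (atoms (space M) F) + ereal \<epsilon>"
    unfolding seq_entropy_part_prod_partition[OF prob Q finite_I T] using H by (intro add_mono) auto
  also have "\<dots> \<le> ereal (real (card I)) * seq_entropy M T a + ereal \<epsilon>"
  proof -
    have "seq_entropy_part M T a (atoms (space M) F) \<le> seq_entropy M T a"
      unfolding seq_entropy_def by (rule SUP_upper) (use Q in simp)
    then show ?thesis by (intro add_mono ereal_mult_left_mono) auto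
  qed
  finally show "seq_entropy_part N ?T a \<zeta> \<le> ereal (real (card I)) * seq_entropy M T a + ereal \<epsilon>" .
qed

theorem seq_entropy_power:
  assumes T: "\<And>n. measure_preserving M (T n)"
  shows "seq_entropy N (\<lambda>n x. restrict (\<lambda>j. T n (x j)) I) a = ereal (real (card I)) * seq_entropy M T a"
proof (rule antisym)
  let ?T = "\<lambda>n x. restrict (\<lambda>j. T n (x j)) I"
  show "seq_entropy N ?T a \<le> ereal (real (card I)) * seq_entropy M T a"
    unfolding seq_entropy_def[of N] by (rule SUP_least) (use seq_entropy_part_power_le[OF T] in simp)
  have "fin_partition M {space M}" by (simp add: fin_partition_def)
  then have "ereal (real (card I)) * seq_entropy M T a
      = (SUP \<xi>\<in>{\<xi>. fin_partition M \<xi>}. ereal (real (card I)) * seq_entropy_part M T a \<xi>)"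
    unfolding seq_entropy_def
    by (intro SUP_ereal_mult_left[symmetric]) (auto intro: seq_entropy_part_nonneg[OF prob])
  also have "\<dots> \<le> seq_entropy N ?T a"
  proof (rule SUP_least)
    fix \<xi> assume "\<xi> \<in> {\<xi>. fin_partition M \<xi>}"
    then have \<xi>: "fin_partition M \<xi>" by simp
    have "ereal (real (card I)) * seq_entropy_part M T a \<xi> = seq_entropy_part N ?T a (prod_partition I \<xi>)"
      by (rule seq_entropy_part_prod_partition[OF prob \<xi> finite_I T, symmetric])
    also have "\<dots> \<le> seq_entropy N ?T a"
      unfolding seq_entropy_def[of N]
      by (rule SUP_upper) (use fin_partition_prod_partition[OF \<xi> finite_I] in simp)
    finally show "ereal (real (card I)) * seq_entropy_part M T a \<xi> \<le> seq_entropy N ?T a" .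
  qed
  finally show "ereal (real (card I)) * seq_entropy M T a \<le> seq_entropy N ?T a" .
qed

end

theorem lemma3p6:
  fixes f :: "nat \<Rightarrow> 'a::metric_space \<Rightarrow> 'a"
    and \<mu> :: "'a measure"
    and a :: "nat \<Rightarrow> nat"
    and k :: nat
  assumes "compact (UNIV :: 'a set)"
    and "\<And>n. continuous_on UNIV (f n)"
    and "prob_space \<mu>"
    and "sets \<mu> = sets borel"
    and "\<And>n B. B \<in> sets borel \<Longrightarrow> measure \<mu> (f n -` B) = measure \<mu> B"
    and "strict_mono a"
    and "k \<ge> 1"
  shows "seq_entropy (PiM {..<k} (\<lambda>_. \<mu>)) (\<lambda>n x. restrict (\<lambda>i. f n (x i)) {..<k}) a
         = ereal (real k) * seq_entropy \<mu> f a"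
proof -
  interpret finite_power_space \<mu> "{..<k}"
    using assms(3) by (simp add: finite_power_space_def)
  have space: "space \<mu> = UNIV" using sets_eq_imp_space_eq[OF assms(4)] by simp
  have "f n \<in> \<mu> \<rightarrow>\<^sub>M \<mu>" for n
    using borel_measurable_continuous_onI[OF assms(2)] measurable_cong_sets[OF assms(4) assms(4)] by simp
  then have "measure_preserving \<mu> (f n)" for n
    unfolding measure_preserving_def using assms(4,5) space by simp
  then show ?thesis using seq_entropy_power by simp
qed

end
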